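(* Let $a,b,k$ be positive integers. If the player cannot win the $(a,b)$-game, then the player cannot win the $(ak,b)$-game.
   Context: The $(n,m)$-game: $n$ counters at positions $1,\dots,n$ (vertices in cyclic order of a regular $n$-gon table), each showing an element of $\mathbb{Z}_m$; a configuration is a vector in $\mathbb{Z}_m^n$, initially arbitrary and unknown. Each turn the player chooses a move $y\in\mathbb{Z}_m^n$ added coordinatewise, then the table is rotated by an adversarially chosen $k\in\mathbb{Z}_n$, replacing $x$ by $x'$ with $x'_{i+k}=x_i$ (indices mod $n$). The player wins if at some moment (including initially) all counters show $0$. A strategy is a finite sequence of moves; it is winning if it forces the zero configuration at some time for every initial configuration and every choice of rotations. "The player can win" means a winning finite sequence exists. *)

theory Defs
  imports Main
begin

text \<open>A configuration of the (n,m)-game is a function nat => int; only the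
  positions 0..n-1 matter (position i+1 of the paper is index i here), and entries
  are read modulo m (elements of Z_m).\<close>

type_synonym config = "nat \<Rightarrow> int"

definition zero_config :: "nat \<Rightarrow> nat \<Rightarrow> config \<Rightarrow> bool" where
  "zero_config n m x \<longleftrightarrow> (\<forall>i<n. x i mod int m = 0)"

text \<open>Rotation by k: x' (i+k) = x i, indices mod n.\<close>
definition rot :: "nat \<Rightarrow> nat \<Rightarrow> config \<Rightarrow> config" where
  "rot n k x = (\<lambda>j. x ((j + n - k mod n) mod n))"

primrec play :: "nat \<Rightarrow> config \<Rightarrow> config list \<Rightarrow> nat list \<Rightarrow> nat \<Rightarrow> config" where
  "play n x ys ks 0 = x"
| "play n x ys ks (Suc t) = rot n (ks ! t) (\<lambda>i. play n x ys ks t i + (ys ! t) i)"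

definition winning :: "nat \<Rightarrow> nat \<Rightarrow> config list \<Rightarrow> bool" where
  "winning n m ys \<longleftrightarrow>
     (\<forall>x ks. length ks = length ys \<longrightarrow>
        (\<exists>t\<le>length ys. zero_config n m (play n x ys ks t)))"

definition can_win :: "nat \<Rightarrow> nat \<Rightarrow> bool" where
  "can_win n m \<longleftrightarrow> (\<exists>ys. winning n m ys)"

end

theory Submission
  imports Defs
begin

text \<open>Fold the table of the (n, m)-game onto a table of a counters for a divisor
  a of n, where counter j shows the sum of all counters in the residue
  class of j modulo a. Folding is additive and turns a rotation by r of the
  big table into a rotation by r of the small one, so every play of the big game folds
  onto a play of the small game with the folded moves; a zero configuration folds onto a zero
  configuration. Since every small configuration is the fold of its extension by zeros, the folded
  moves of a winning strategy for the big game win the small game.\<close>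

definition rot_source :: "nat \<Rightarrow> nat \<Rightarrow> nat \<Rightarrow> nat" where
  "rot_source n r j = (j + n - r mod n) mod n"

lemma rot_eq_rot_source: "rot n r x j = x (rot_source n r j)"
  by (simp add: rot_def rot_source_def)

lemma int_rot_source:
  assumes "0 < n"
  shows "int (rot_source n r j) = (int j - int r) mod int n"
proof -
  have "r mod n < n" using assms by simp
  then have "int (j + n - r mod n) = int j - int r + int n * (1 + int r div int n)"
    by (simp add: of_nat_diff zmod_int algebra_simps minus_mod_eq_mult_div[symmetric])
  then show ?thesis by (simp add: rot_source_def zmod_int)
qed

lemma rot_source_less: "0 < n \<Longrightarrow> rot_source n r j < n"
  by (simp add: rot_source_def)

lemma rot_source_mod_dvd:
  assumes "a dvd n" "0 < n"
  shows "rot_source n r j mod a = rot_source a r (j mod a)"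
proof -
  have a: "0 < a" using assms by (auto intro: gr0I)
  have "int (rot_source n r j mod a) = (int j - int r) mod int a"
    using assms by (simp add: of_nat_mod int_rot_source mod_mod_cancel)
  also have "\<dots> = int (rot_source a r (j mod a))"
    using a by (simp add: int_rot_source of_nat_mod mod_diff_left_eq)
  finally show ?thesis by simp
qed

lemma rot_source_mod: "0 < n \<Longrightarrow> rot_source n r (j mod n) = rot_source n r j"
  using rot_source_mod_dvd[of n n r j] by (simp add: rot_source_less)

lemma rot_source_add_mod:
  assumes "i < n"
  shows "rot_source n r ((i + r) mod n) = i"
proof -
  have "int (rot_source n r ((i + r) mod n)) = (int ((i + r) mod n) - int r) mod int n"
    using assms by (simp add: int_rot_source)
  also have "\<dots> = int i" using assms by (simp add: of_nat_mod mod_diff_left_eq)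
  finally show ?thesis by simp
qed

lemma add_rot_source_mod:
  assumes "i < n"
  shows "(rot_source n r i + r) mod n = i"
proof -
  have "int ((rot_source n r i + r) mod n) = ((int i - int r) mod int n + int r) mod int n"
    using assms by (simp add: of_nat_mod int_rot_source)
  also have "\<dots> = int i" using assms by (simp add: mod_add_left_eq)
  finally show ?thesis by simp
qed

lemma rot_source_inj:
  assumes "i < n" "j < n" "rot_source n r i = rot_source n r j"
  shows "i = j"
  using assms add_rot_source_mod by metis

definition fold_config :: "nat \<Rightarrow> nat \<Rightarrow> config \<Rightarrow> config" where
  "fold_config n a x = (\<lambda>j. \<Sum>i | i < n \<and> i mod a = j mod a. x i)"

lemma fold_config_add:
  "fold_config n a (\<lambda>i. x i + y i) = (\<lambda>j. fold_config n a x j + fold_config n a y j)"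
  by (simp add: fold_config_def sum.distrib)

lemma fold_config_rot:
  assumes "a dvd n" "0 < n"
  shows "fold_config n a (rot n r x) = rot a r (fold_config n a x)"
proof
  fix j
  have a: "0 < a" using assms by (auto intro: gr0I)
  let ?S = "{i. i < n \<and> i mod a = j mod a}"
  let ?T = "{i. i < n \<and> i mod a = rot_source a r j}"
  have "(\<Sum>i\<in>?S. x (rot_source n r i)) = (\<Sum>i\<in>?T. x i)"
  proof (rule sum.reindex_bij_witness[where i = "\<lambda>i. (i + r) mod n" and j = "rot_source n r"])
    fix i assume i: "i \<in> ?S"
    then show "(rot_source n r i + r) mod n = i" by (simp add: add_rot_source_mod)
    show "rot_source n r i \<in> ?T"
      using i assms a by (simp add: rot_source_mod_dvd rot_source_mod rot_source_less)
  next
    fix i assume i: "i \<in> ?T"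
    then show "rot_source n r ((i + r) mod n) = i" by (simp add: rot_source_add_mod)
    have "rot_source a r (((i + r) mod n) mod a) = rot_source n r ((i + r) mod n) mod a"
      using assms by (simp add: rot_source_mod_dvd)
    also have "\<dots> = rot_source a r (j mod a)"
      using i a by (simp add: rot_source_add_mod rot_source_mod[of a])
    finally have "((i + r) mod n) mod a = j mod a"
      using a rot_source_inj mod_less_divisor by metis
    then show "(i + r) mod n \<in> ?S" using assms by simp
  qed simp
  then show "fold_config n a (rot n r x) j = rot a r (fold_config n a x) j"
    using a by (simp add: fold_config_def rot_eq_rot_source rot_source_less)
qed

lemma fold_config_play:
  assumes "a dvd n" "0 < n" "t \<le> length ys"
  shows "fold_config n a (play n x ys ks t) = play a (fold_config n a x) (map (fold_config n a) ys) ks t"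
  using assms(3)
proof (induction t)
  case 0
  then show ?case by simp
next
  case (Suc t)
  then show ?case by (simp add: fold_config_rot[OF assms(1,2)] fold_config_add)
qed

lemma zero_config_fold_config:
  "zero_config n m x \<Longrightarrow> zero_config a m (fold_config n a x)"
  unfolding zero_config_def fold_config_def
  by (auto intro!: dvd_sum simp: dvd_eq_mod_eq_0[symmetric])

lemma fold_config_extend_zero:
  assumes "a \<le> n" "j < a"
  shows "fold_config n a (\<lambda>i. if i < a then x i else 0) j = x j"
proof -
  have "fold_config n a (\<lambda>i. if i < a then x i else 0) j
      = (\<Sum>i | i < n \<and> i mod a = j mod a. if i = j then x j else 0)"
    unfolding fold_config_def using assms(2) by (intro sum.cong) auto
  also have "\<dots> = x j" using assms by (simp add: sum.delta)
  finally show ?thesis .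
qed

lemma play_cong:
  assumes "0 < n" "\<And>i. i < n \<Longrightarrow> x i = x' i" "i < n"
  shows "play n x ys ks t i = play n x' ys ks t i"
  using assms(3)
proof (induction t arbitrary: i)
  case 0
  then show ?case using assms(2) by simp
next
  case (Suc t)
  then show ?case using assms(1) by (simp add: rot_eq_rot_source rot_source_less)
qed

lemma winning_fold_config:
  assumes "a dvd n" "0 < n" "winning n m ys"
  shows "winning a m (map (fold_config n a) ys)"
  unfolding winning_def
proof (intro allI impI)
  fix x :: config and ks :: "nat list"
  assume len: "length ks = length (map (fold_config n a) ys)"
  have a: "0 < a" "a \<le> n" using assms by (auto intro: gr0I dvd_imp_le)
  define X :: config where "X = (\<lambda>i. if i < a then x i else 0)"
  obtain t where t: "t \<le> length ys" "zero_config n m (play n X ys ks t)"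
    using assms(3) len unfolding winning_def by auto
  then have "zero_config a m (play a (fold_config n a X) (map (fold_config n a) ys) ks t)"
    using zero_config_fold_config fold_config_play[OF assms(1,2)] by metis
  moreover have "play a (fold_config n a X) (map (fold_config n a) ys) ks t i
      = play a x (map (fold_config n a) ys) ks t i" if "i < a" for i
    using a that by (intro play_cong) (simp_all add: X_def fold_config_extend_zero)
  ultimately show "\<exists>t\<le>length (map (fold_config n a) ys).
      zero_config a m (play a x (map (fold_config n a) ys) ks t)"
    using t(1) by (auto simp: zero_config_def)
qed

lemma can_win_dvd: "a dvd n \<Longrightarrow> 0 < n \<Longrightarrow> can_win n m \<Longrightarrow> can_win a m"
  unfolding can_win_def using winning_fold_config by blast

theorem lemma3p1:
  fixes a b k :: nat
  assumes "a > 0" and "b > 0" and "k > 0"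
    and "\<not> can_win a b"
  shows "\<not> can_win (a * k) b"
proof -
  have "a dvd a * k" "0 < a * k" using assms by simp_all
  then show ?thesis using assms(4) can_win_dvd by blast
qed

end
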